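(* Let $X$ be the subshift obtained from the marker construction described in the context. For each $x \in X$ and each $j \in \mathbb{N}$ there is a unique decomposition of $x$ into $\mathcal{C}_j$-words, i.e., there is a unique $r \in \{0,1,\dots,l_j-1\}$ such that $x_{[r+kl_j,\, r+(k+1)l_j)} \in \mathcal{C}_j$ for all $k \in \mathbb{Z}$.
   Context: Marker construction. Let $l_1$ be a sufficiently large perfect square and $N_1 = 2^{\sqrt{l_1}}$. Let $\mathcal{C}_1$ be a set of $N_1$ binary words of length $l_1$, each beginning with $001$, such that the word $00$ occurs in each element of $\mathcal{C}_1$ only as its prefix. Inductively, given a set $\mathcal{C}_j$ of $N_j$ distinct words of length $l_j$ with an ordering $\mathcal{C}_j = \{u_1^{(j)},\dots,u_{N_j}^{(j)}\}$, let $P_j = \{2\}\cup\{i^2 : 2 \le i \le \lfloor\sqrt{N_j}\rfloor\}$, and let $\mathcal{C}_{j+1}$ be the set of all words $u^{(j)}_{\pi(1)}u^{(j)}_{\pi(2)}\cdots u^{(j)}_{\pi(N_j)}$ where $\pi$ ranges over permutations of $\{1,\dots,N_j\}$ fixing every element outside $P_j$. Thus $N_{j+1} = (\lfloor\sqrt{N_j}\rfloor)!$ and $l_{j+1} = l_j N_j$. The ordering of $\mathcal{C}_{j+1}$ is arbitrary except that its first element $u^{(j+1)}_1$ is $u_1^{(j)}u_2^{(j)}\cdots u_{N_j}^{(j)}$. $X \subset \{0,1\}^{\mathbb{Z}}$ is the set of bi-infinite sequences each finite subword of which is a subword of some word in $\bigcup_j \mathcal{C}_j$. *)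

theory Defs
  imports Complex_Main "HOL-Combinatorics.Permutations"
begin

text \<open>Binary words are bool lists (False = 0, True = 1).\<close>

definition Pset :: "nat \<Rightarrow> nat set" where
  "Pset N = {2} \<union> {i^2 | i. 2 \<le> i \<and> i \<le> nat \<lfloor>sqrt (real N)\<rfloor>}"

text \<open>Given the ordered list us = [u_1,...,u_N] of level-j words, the set of level-(j+1) words.
  Positions are 1-indexed as in the paper: u_i = us ! (i - 1).\<close>
definition next_level :: "bool list list \<Rightarrow> bool list set" where
  "next_level us = {concat (map (\<lambda>i. us ! (\<pi> i - 1)) [1..<Suc (length us)]) | \<pi>.
      \<pi> permutes {1..length us} \<and> (\<forall>i. i \<notin> Pset (length us) \<longrightarrow> \<pi> i = i)}"

definition only_prefix_00 :: "bool list \<Rightarrow> bool" where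
  "only_prefix_00 w \<longleftrightarrow> (\<forall>i. Suc i < length w \<and> \<not> w ! i \<and> \<not> w ! Suc i \<longrightarrow> i = 0)"

text \<open>ord j is the ordered list of the words of C_j (j \<ge> 1); ord 0 is unused.\<close>
definition marker_system :: "nat \<Rightarrow> (nat \<Rightarrow> bool list list) \<Rightarrow> bool" where
  "marker_system l1 ord \<longleftrightarrow>
     (\<exists>k. l1 = k^2 \<and> length (ord 1) = 2^k) \<and>
     (\<forall>j\<ge>1. distinct (ord j)) \<and>
     (\<forall>w\<in>set (ord 1). length w = l1 \<and> take 3 w = [False, False, True] \<and> only_prefix_00 w) \<and>
     (\<forall>j\<ge>1. set (ord (Suc j)) = next_level (ord j) \<and> ord (Suc j) \<noteq> [] \<and>
              hd (ord (Suc j)) = concat (ord j))"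

definition lev_len :: "nat \<Rightarrow> (nat \<Rightarrow> bool list list) \<Rightarrow> nat \<Rightarrow> nat" where
  "lev_len l1 ord j = l1 * (\<Prod>i\<in>{1..<j}. length (ord i))"

definition seg :: "(int \<Rightarrow> bool) \<Rightarrow> int \<Rightarrow> nat \<Rightarrow> bool list" where
  "seg x a n = map (\<lambda>i. x (a + int i)) [0..<n]"

definition marker_subshift :: "(nat \<Rightarrow> bool list list) \<Rightarrow> (int \<Rightarrow> bool) set" where
  "marker_subshift ord = {x. \<forall>a n. \<exists>j\<ge>1. \<exists>w\<in>set (ord j). \<exists>p s. w = p @ seg x a n @ s}"

end

theory Submission
  imports Defs "HOL-Library.Infinite_Set"
begin

text \<open>
  Call r a C_j-parsing of x (tiled_by) if x is cut into C_j-words at the positions r + k l_j.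
  Existence: every window of x lies inside a word of some level, and a window longer than l_j
  forces that level to be at least j, so the word is a concatenation of C_j-words and the window
  carries a local parsing. Only l_j phases are possible, so one of them serves arbitrarily long
  windows, hence all of x.

  Uniqueness modulo l_j is proved by induction on j. At level 1 the block boundaries are exactly
  the occurrences of 001, because 00 occurs in a C_1-word only as its prefix. A C_(j+1)-parsing
  refines to a C_j-parsing, so two C_(j+1)-parsings differ by m l_j modulo l_(j+1). Position 1 is
  fixed by every admissible permutation, so every C_(j+1)-word starts with u_1; hence one parsing
  sees u_1 where the other sees its m-th block, and distinctness of the C_j-words together with
  injectivity of the permutation gives m = 0.
\<close>

lemma seg_length [simp]: "length (seg x a n) = n"
  by (simp add: seg_def)

lemma seg_nth [simp]: "i < n \<Longrightarrow> seg x a n ! i = x (a + int i)"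
  by (simp add: seg_def)

lemma seg_take_drop: "t + m \<le> n \<Longrightarrow> seg x (a + int t) m = take m (drop t (seg x a n))"
  by (rule nth_equalityI) (auto simp: algebra_simps)

lemma length_concat_uniform: "\<forall>v\<in>set ws. length v = l \<Longrightarrow> length (concat ws) = length ws * l"
  by (induction ws) auto

lemma take_drop_concat_uniform:
  "\<forall>v\<in>set ws. length v = l \<Longrightarrow> i < length ws \<Longrightarrow> take l (drop (i * l) (concat ws)) = ws ! i"
proof (induction ws arbitrary: i)
  case (Cons v ws)
  show ?case
  proof (cases i)
    case (Suc i')
    then have "drop (i * l) (concat (v # ws)) = drop (i' * l) (concat ws)"
      using Cons.prems by simp
    then show ?thesis using Cons Suc by simp
  qed (use Cons in simp)
qed simp

lemma seg_concat_uniform: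
  assumes "\<forall>v\<in>set ws. length v = l" and "seg x a (length ws * l) = concat ws" and "i < length ws"
  shows "seg x (a + int (i * l)) l = ws ! i"
proof -
  have "i * l + l \<le> length ws * l"
    using assms(3) by (metis Suc_leI add.commute mult_Suc mult_le_mono1)
  then show ?thesis
    using assms seg_take_drop take_drop_concat_uniform by metis
qed

lemma next_level_blocks:
  assumes "w \<in> next_level us"
  obtains \<sigma> where "\<sigma> 0 = 0" "inj_on \<sigma> {..<length us}" "\<forall>i<length us. \<sigma> i < length us"
    "w = concat (map (\<lambda>i. us ! \<sigma> i) [0..<length us])"
proof -
  obtain \<pi> where \<pi>: "\<pi> permutes {1..length us}" "\<forall>i. i \<notin> Pset (length us) \<longrightarrow> \<pi> i = i"
    and w: "w = concat (map (\<lambda>i. us ! (\<pi> i - 1)) [1..<Suc (length us)])"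
    using assms unfolding next_level_def by blast
  define \<sigma> where "\<sigma> i = \<pi> (Suc i) - 1" for i
  have "1 \<notin> Pset (length us)"
  proof
    assume "1 \<in> Pset (length us)"
    then obtain i :: nat where "1 = i\<^sup>2" "2 \<le> i" unfolding Pset_def by auto
    moreover from \<open>2 \<le> i\<close> have "2\<^sup>2 \<le> i\<^sup>2" by (rule power_mono) simp
    ultimately show False by simp
  qed
  have range: "\<pi> (Suc i) \<in> {1..length us}" if "i < length us" for i
    using permutes_in_image[OF \<pi>(1)] that by simp
  have "\<sigma> 0 = 0" using \<open>1 \<notin> Pset (length us)\<close> \<pi>(2) by (simp add: \<sigma>_def)
  moreover have "inj_on \<sigma> {..<length us}"
  proof (rule inj_onI)
    fix a b assume ab: "a \<in> {..<length us}" "b \<in> {..<length us}" and "\<sigma> a = \<sigma> b"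
    moreover have "1 \<le> \<pi> (Suc a)" "1 \<le> \<pi> (Suc b)" using range ab by simp_all
    ultimately have "\<pi> (Suc a) = \<pi> (Suc b)" unfolding \<sigma>_def by simp
    then show "a = b" using permutes_inj[OF \<pi>(1)] by (simp add: inj_eq)
  qed
  moreover have "\<forall>i<length us. \<sigma> i < length us" using range by (fastforce simp: \<sigma>_def)
  moreover have "w = concat (map (\<lambda>i. us ! \<sigma> i) [0..<length us])"
  proof -
    have "[1..<Suc (length us)] = map Suc [0..<length us]" by (simp add: map_Suc_upt)
    then show ?thesis unfolding w \<sigma>_def by (simp only: map_map comp_def)
  qed
  ultimately show ?thesis using that by blast
qed

lemma concat_in_concat_lists:
  "set vs \<subseteq> concat ` lists S \<Longrightarrow> concat vs \<in> concat ` lists S"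
proof (induction vs)
  case Nil
  show ?case by (metis concat.simps(1) image_eqI lists.Nil)
next
  case (Cons v vs)
  then obtain ws ws' where "v = concat ws" "ws \<in> lists S" "concat vs = concat ws'" "ws' \<in> lists S"
    by auto
  then have "concat (v # vs) = concat (ws @ ws')" "ws @ ws' \<in> lists S" by simp_all
  then show ?case by blast
qed

lemma next_level_subset_concat_lists: "next_level us \<subseteq> concat ` lists (set us)"
proof
  fix w assume "w \<in> next_level us"
  then obtain \<sigma> where \<sigma>: "\<forall>i<length us. \<sigma> i < length us"
    and w: "w = concat (map (\<lambda>i. us ! \<sigma> i) [0..<length us])"
    by (rule next_level_blocks)
  have "map (\<lambda>i. us ! \<sigma> i) [0..<length us] \<in> lists (set us)" using \<sigma> by auto
  then show "w \<in> concat ` lists (set us)" unfolding w by (rule imageI)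
qed

lemma length_next_level:
  assumes "\<forall>u\<in>set us. length u = l" and "w \<in> next_level us"
  shows "length w = length us * l"
proof -
  obtain \<sigma> where "\<forall>i<length us. \<sigma> i < length us"
    and "w = concat (map (\<lambda>i. us ! \<sigma> i) [0..<length us])"
    using next_level_blocks[OF assms(2)] by blast
  moreover have "\<forall>v\<in>set (map (\<lambda>i. us ! \<sigma> i) [0..<length us]). length v = l"
    using calculation(1) assms(1) by auto
  ultimately show ?thesis using length_concat_uniform by (metis diff_zero length_map length_upt)
qed

lemma seg_next_level_blocks:
  assumes uniform: "\<forall>u\<in>set us. length u = l"
    and "seg x a (length us * l) \<in> next_level us"
  obtains \<sigma> where "\<sigma> 0 = 0" "inj_on \<sigma> {..<length us}"
    "\<forall>i<length us. \<sigma> i < length us \<and> seg x (a + int (i * l)) l = us ! \<sigma> i"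
proof -
  obtain \<sigma> where \<sigma>: "\<sigma> 0 = 0" "inj_on \<sigma> {..<length us}" "\<forall>i<length us. \<sigma> i < length us"
    and seg: "seg x a (length us * l) = concat (map (\<lambda>i. us ! \<sigma> i) [0..<length us])"
    using next_level_blocks[OF assms(2)] by blast
  define ws where "ws = map (\<lambda>i. us ! \<sigma> i) [0..<length us]"
  have ws: "length ws = length us" "\<forall>v\<in>set ws. length v = l"
    using \<sigma>(3) uniform by (auto simp: ws_def)
  have "seg x (a + int (i * l)) l = us ! \<sigma> i" if "i < length us" for i
  proof -
    have "seg x (a + int (i * l)) l = ws ! i"
      using seg_concat_uniform[OF ws(2)] seg that unfolding ws(1) ws_def[symmetric] by blast
    then show ?thesis using that by (simp add: ws_def)
  qed
  with \<sigma> show ?thesis using that by blast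
qed

definition tiled_by :: "(int \<Rightarrow> bool) \<Rightarrow> bool list set \<Rightarrow> nat \<Rightarrow> int \<Rightarrow> bool" where
  "tiled_by x S l r \<longleftrightarrow> (\<forall>k::int. seg x (r + k * int l) l \<in> S)"

lemma int_mult_eq_div_mod_blocks:
  assumes "0 < int N"
  shows "k * int l = k div int N * int (N * l) + int (nat (k mod int N) * l)"
proof -
  have "(q * int N + m) * int l = q * int (N * l) + m * int l" for q m :: int
    by (simp add: algebra_simps)
  moreover have "int (nat (k mod int N)) = k mod int N" using assms by simp
  ultimately show ?thesis
    by (metis div_mult_mod_eq of_nat_mult)
qed

lemma tiled_by_next_level_imp_tiled_by:
  assumes uniform: "\<forall>u\<in>set us. length u = l" and "us \<noteq> []"
    and tiled: "tiled_by x (next_level us) (length us * l) r"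
  shows "tiled_by x (set us) l r"
  unfolding tiled_by_def
proof
  fix k :: int
  define N where "N = length us"
  have N: "0 < int N" using \<open>us \<noteq> []\<close> by (simp add: N_def)
  define i where "i = nat (k mod int N)"
  have iN: "i < N" using N by (simp add: i_def nat_less_iff)
  have "r + k * int l = (r + (k div int N) * int (N * l)) + int (i * l)"
    using int_mult_eq_div_mod_blocks[OF N, of k l] by (simp add: i_def)
  moreover obtain \<sigma> where "\<forall>i<N. \<sigma> i < N \<and> seg x (r + (k div int N) * int (N * l) + int (i * l)) l = us ! \<sigma> i"
    using seg_next_level_blocks[OF uniform tiled[unfolded tiled_by_def, rule_format, of "k div int N"]]
    unfolding N_def by blast
  ultimately show "seg x (r + k * int l) l \<in> set us"
    using iN by (simp add: N_def add.assoc)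
qed

lemma next_level_tilings_congruent:
  assumes uniform: "\<forall>u\<in>set us. length u = l" and "distinct us" and "us \<noteq> []"
    and tiled: "tiled_by x (next_level us) (length us * l) r"
    and tiled': "tiled_by x (next_level us) (length us * l) r'"
    and "int l dvd r' - r"
  shows "int (length us * l) dvd r' - r"
proof -
  have N: "0 < int (length us)" using \<open>us \<noteq> []\<close> by simp
  obtain q where q: "r' - r = int l * q" using \<open>int l dvd r' - r\<close> by (rule dvdE)
  define k where "k = q div int (length us)"
  define m where "m = nat (q mod int (length us))"
  have m: "m < length us" using N by (simp add: m_def nat_less_iff)
  have "r' - r = q * int l" using q by (simp only: mult.commute)
  then have r': "r' = (r + k * int (length us * l)) + int (m * l)"
    using int_mult_eq_div_mod_blocks[OF N, of q l] unfolding k_def m_def by linarith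
  have "seg x (r + k * int (length us * l)) (length us * l) \<in> next_level us"
    using tiled unfolding tiled_by_def by blast
  then obtain \<sigma> where \<sigma>: "\<sigma> 0 = 0" "inj_on \<sigma> {..<length us}"
    "\<forall>i<length us. \<sigma> i < length us \<and> seg x (r + k * int (length us * l) + int (i * l)) l = us ! \<sigma> i"
    by (rule seg_next_level_blocks[OF uniform])
  have "seg x r' (length us * l) \<in> next_level us"
    using tiled'[unfolded tiled_by_def, rule_format, of 0] by simp
  then obtain \<sigma>' where \<sigma>': "\<sigma>' 0 = 0" "inj_on \<sigma>' {..<length us}"
    "\<forall>i<length us. \<sigma>' i < length us \<and> seg x (r' + int (i * l)) l = us ! \<sigma>' i"
    by (rule seg_next_level_blocks[OF uniform])
  \<comment> \<open>both tilings read the first word of the list at position r'\<close>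
  have "us ! \<sigma> m = seg x r' l" using \<sigma>(3)[rule_format, OF m] r' by simp
  also have "\<dots> = us ! 0" using \<sigma>'(3)[rule_format, of 0] \<sigma>'(1) N by simp
  finally have "\<sigma> m = 0"
    using nth_eq_iff_index_eq[OF \<open>distinct us\<close>] \<sigma>(3)[rule_format, OF m] N by simp
  then have "m = 0" using inj_onD[OF \<sigma>(2), of m 0] \<sigma>(1) m N by simp
  then have "r' - r = int (length us * l) * k" using r' by (simp add: algebra_simps)
  then show ?thesis by (rule dvdI)
qed

lemma take_3_nth:
  assumes "take 3 w = [a, b, c]"
  shows "w ! 0 = a" "w ! 1 = b" "w ! 2 = c"
proof -
  have "w ! i = [a, b, c] ! i" if "i < 3" for i
    using nth_take[OF that, of w] assms by simp
  from this[of 0] this[of 1] this[of 2] show "w ! 0 = a" "w ! 1 = b" "w ! 2 = c" by simp_all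
qed

lemma marker_occurs_at_boundary:
  assumes "3 \<le> l"
    and marker: "\<forall>w\<in>S. length w = l \<and> take 3 w = [False, False, True] \<and> only_prefix_00 w"
    and tiled: "tiled_by x S l r"
    and z: "\<not> x z" "\<not> x (z + 1)" "x (z + 2)"
  shows "int l dvd z - r"
proof (rule ccontr)
  assume not_dvd: "\<not> int l dvd z - r"
  have l: "0 < int l" using \<open>3 \<le> l\<close> by simp
  define k where "k = (z - r) div int l"
  define t where "t = nat ((z - r) mod int l)"
  have "t < l" using l by (simp add: t_def nat_less_iff)
  have "int t = (z - r) mod int l" using l by (simp add: t_def)
  then have z_eq: "z = r + k * int l + int t"
    using div_mult_mod_eq[of "z - r" "int l"] unfolding k_def by linarith
  have "t \<noteq> 0" using not_dvd \<open>int t = (z - r) mod int l\<close> by (auto simp: dvd_eq_mod_eq_0)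
  define w where "w = seg x (r + k * int l) l"
  have "w \<in> S" using tiled unfolding tiled_by_def w_def by blast
  then have w: "length w = l" "only_prefix_00 w" using marker by auto
  show False
  proof (cases "Suc t < l")
    case True
    then have "\<not> w ! t" "\<not> w ! Suc t"
      using z(1,2) \<open>t < l\<close> by (simp_all add: w_def z_eq algebra_simps)
    then have "t = 0" using w True unfolding only_prefix_00_def by (simp add: w(1))
    with \<open>t \<noteq> 0\<close> show False ..
  next
    case False
    \<comment> \<open>the 00 straddles two words, so the next word would start with 01\<close>
    then have "Suc t = l" using \<open>t < l\<close> by simp
    define v where "v = seg x (r + (k + 1) * int l) l"
    have "v \<in> S" using tiled unfolding tiled_by_def v_def by blast
    then have "take 3 v = [False, False, True]" using marker by blast
    from take_3_nth(2)[OF this] have "\<not> v ! 1" by simp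
    have "v ! 1 = x (r + (k + 1) * int l + 1)" using \<open>3 \<le> l\<close> by (simp add: v_def)
    also have "r + (k + 1) * int l + 1 = z + 2"
      using z_eq \<open>Suc t = l\<close> by (simp add: algebra_simps)
    finally show False using \<open>\<not> v ! 1\<close> z(3) by simp
  qed
qed

lemma marker_tilings_congruent:
  assumes "3 \<le> l"
    and marker: "\<forall>w\<in>S. length w = l \<and> take 3 w = [False, False, True] \<and> only_prefix_00 w"
    and tiled: "tiled_by x S l r" and tiled': "tiled_by x S l r'"
  shows "int l dvd r' - r"
proof -
  have "seg x r' l \<in> S" using tiled' unfolding tiled_by_def by (metis add.right_neutral mult_zero_left)
  then have "take 3 (seg x r' l) = [False, False, True]" using marker by blast
  from take_3_nth[OF this] have "\<not> x r'" "\<not> x (r' + 1)" "x (r' + 2)"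
    using \<open>3 \<le> l\<close> by simp_all
  then show ?thesis by (rule marker_occurs_at_boundary[OF assms(1,2) tiled])
qed

lemma marker_system_next_level:
  "marker_system l1 ord \<Longrightarrow> 1 \<le> j \<Longrightarrow> set (ord (Suc j)) = next_level (ord j)"
  by (simp add: marker_system_def)

lemma marker_system_distinct: "marker_system l1 ord \<Longrightarrow> 1 \<le> j \<Longrightarrow> distinct (ord j)"
  by (simp add: marker_system_def)

lemma marker_system_nonempty:
  assumes "marker_system l1 ord" and "1 \<le> j"
  shows "ord j \<noteq> []"
proof (cases "j = 1")
  case True
  obtain k where "length (ord 1) = 2 ^ k" using assms(1) unfolding marker_system_def by blast
  then show ?thesis using True by auto
next
  case False
  then have "j = Suc (j - 1)" "1 \<le> j - 1" using assms(2) by simp_all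
  moreover have "\<forall>i\<ge>1. ord (Suc i) \<noteq> []" using assms(1) unfolding marker_system_def by blast
  ultimately show ?thesis by metis
qed

lemma lev_len_Suc: "1 \<le> j \<Longrightarrow> lev_len l1 ord (Suc j) = length (ord j) * lev_len l1 ord j"
  by (simp add: lev_len_def prod.atLeastLessThan_Suc)

lemma lev_len_pos:
  assumes "marker_system l1 ord" and "0 < l1" and "1 \<le> j"
  shows "0 < lev_len l1 ord j"
  unfolding lev_len_def using assms marker_system_nonempty by (simp add: prod_pos)

lemma lev_len_mono:
  assumes "marker_system l1 ord" and "1 \<le> i" and "i \<le> j"
  shows "lev_len l1 ord i \<le> lev_len l1 ord j"
  using \<open>i \<le> j\<close>
proof (induction j rule: dec_induct)
  case (step j)
  then have "1 \<le> j" using \<open>1 \<le> i\<close> by simp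
  then have "1 \<le> length (ord j)"
    using marker_system_nonempty[OF assms(1)] by (simp add: Suc_le_eq)
  then have "lev_len l1 ord j \<le> length (ord j) * lev_len l1 ord j"
    using mult_le_mono1[of 1 "length (ord j)" "lev_len l1 ord j"] by simp
  with step.IH show ?case unfolding lev_len_Suc[OF \<open>1 \<le> j\<close>] by (rule le_trans)
qed simp

lemma marker_word_length:
  assumes "marker_system l1 ord" and "1 \<le> j" and "w \<in> set (ord j)"
  shows "length w = lev_len l1 ord j"
  using \<open>1 \<le> j\<close> \<open>w \<in> set (ord j)\<close>
proof (induction j arbitrary: w rule: dec_induct)
  case base
  then show ?case using assms(1) by (simp add: marker_system_def lev_len_def)
next
  case (step j)
  then show ?case
    using length_next_level[of "ord j" "lev_len l1 ord j" w]
    by (simp add: marker_system_next_level[OF assms(1)] lev_len_Suc)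
qed

lemma marker_word_concat_lists:
  assumes "marker_system l1 ord" and "1 \<le> j" and "j \<le> j'"
  shows "set (ord j') \<subseteq> concat ` lists (set (ord j))"
  using \<open>j \<le> j'\<close>
proof (induction j' rule: dec_induct)
  case base
  show ?case by (auto intro!: rev_image_eqI[of "[_]"])
next
  case (step j')
  have "set (ord (Suc j')) \<subseteq> concat ` lists (set (ord j'))"
    using next_level_subset_concat_lists marker_system_next_level[OF assms(1)] step.hyps assms(2)
    by simp
  show ?case
  proof
    fix w assume "w \<in> set (ord (Suc j'))"
    then obtain vs where "w = concat vs" "set vs \<subseteq> set (ord j')"
      using \<open>set (ord (Suc j')) \<subseteq> _\<close> by blast
    with step.IH show "w \<in> concat ` lists (set (ord j))"
      using concat_in_concat_lists by blast
  qed
qed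

lemma marker_system_tilings_congruent:
  assumes ms: "marker_system l1 ord" and "3 \<le> l1" and "1 \<le> j"
    and "tiled_by x (set (ord j)) (lev_len l1 ord j) r"
    and "tiled_by x (set (ord j)) (lev_len l1 ord j) r'"
  shows "int (lev_len l1 ord j) dvd r' - r"
  using assms(3-5)
proof (induction j arbitrary: r r' rule: dec_induct)
  case base
  have "\<forall>w\<in>set (ord 1). length w = l1 \<and> take 3 w = [False, False, True] \<and> only_prefix_00 w"
    using ms by (simp add: marker_system_def)
  with base show ?case using marker_tilings_congruent[OF \<open>3 \<le> l1\<close>] by (simp add: lev_len_def)
next
  case (step j)
  have j: "1 \<le> j" using step.hyps by simp
  have uniform: "\<forall>u\<in>set (ord j). length u = lev_len l1 ord j"
    using marker_word_length[OF ms j] by blast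
  note level_Suc = marker_system_next_level[OF ms j] lev_len_Suc[OF j]
  have tiled: "tiled_by x (next_level (ord j)) (length (ord j) * lev_len l1 ord j) r"
    and tiled': "tiled_by x (next_level (ord j)) (length (ord j) * lev_len l1 ord j) r'"
    using step.prems unfolding level_Suc by simp_all
  have "int (lev_len l1 ord j) dvd r' - r"
    using step.IH tiled_by_next_level_imp_tiled_by[OF uniform marker_system_nonempty[OF ms j]] tiled tiled'
    by blast
  then show ?case
    using next_level_tilings_congruent[OF uniform marker_system_distinct[OF ms j]
        marker_system_nonempty[OF ms j] tiled tiled']
    unfolding level_Suc by simp
qed

definition tiled_within :: "(int \<Rightarrow> bool) \<Rightarrow> bool list set \<Rightarrow> nat \<Rightarrow> int \<Rightarrow> int \<Rightarrow> int \<Rightarrow> bool" where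
  "tiled_within x S l r a b \<longleftrightarrow>
     (\<forall>k::int. a \<le> r + k * int l \<longrightarrow> r + k * int l + int l \<le> b \<longrightarrow> seg x (r + k * int l) l \<in> S)"

lemma concat_window_tiled_within:
  assumes "0 < l" and uniform: "\<forall>v\<in>S. length v = l"
    and "p @ seg x a n @ s \<in> concat ` lists S"
  shows "\<exists>r. 0 \<le> r \<and> r < int l \<and> tiled_within x S l r a (a + int n)"
proof -
  obtain ws where ws: "p @ seg x a n @ s = concat ws" "set ws \<subseteq> S"
    using assms(3) by auto
  have ws_uniform: "\<forall>v\<in>set ws. length v = l" using ws(2) uniform by blast
  define P where "P = length p"
  define r where "r = (a - int P) mod int l"
  have "tiled_within x S l r a (a + int n)"
    unfolding tiled_within_def
  proof (intro allI impI)
    fix k :: int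
    assume lower: "a \<le> r + k * int l" and upper: "r + k * int l + int l \<le> a + int n"
    define t where "t = nat (r + k * int l - a)"
    have t: "int t = r + k * int l - a" using lower by (simp add: t_def)
    have "t + l \<le> n" using upper t by linarith
    have "int l dvd (a - int P) - r" unfolding r_def by (rule dvd_minus_mod)
    moreover have "int (P + t) = k * int l - ((a - int P) - r)" using t by simp
    ultimately have "int l dvd int (P + t)" by (metis dvd_diff dvd_triv_right)
    then have "l dvd P + t" by (simp only: int_dvd_int_iff)
    then obtain i where i: "P + t = i * l" by (metis dvdE mult.commute)
    have "Suc i * l \<le> length ws * l"
      using i \<open>t + l \<le> n\<close> length_concat_uniform[OF ws_uniform] arg_cong[OF ws(1), of length]
      by (simp add: P_def)
    then have "i < length ws" using \<open>0 < l\<close> by (metis Suc_le_eq mult_le_cancel2)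
    have "seg x (r + k * int l) l = seg x (a + int t) l" using t by simp
    also have "\<dots> = take l (drop t (seg x a n))" using seg_take_drop[OF \<open>t + l \<le> n\<close>] .
    also have "\<dots> = take l (drop (P + t) (p @ seg x a n @ s))"
      using \<open>t + l \<le> n\<close> by (simp add: P_def)
    also have "\<dots> = ws ! i"
      unfolding i ws(1) using take_drop_concat_uniform[OF ws_uniform \<open>i < length ws\<close>] .
    finally show "seg x (r + k * int l) l \<in> S" using \<open>i < length ws\<close> ws(2) by auto
  qed
  moreover have "0 \<le> r" "r < int l" using \<open>0 < l\<close> by (simp_all add: r_def)
  ultimately show ?thesis by blast
qed

lemma tiled_by_if_tiled_within:
  assumes "0 < l"
    and windows: "infinite {n::nat. \<exists>r. 0 \<le> r \<and> r < int l \<and> tiled_within x S l r (- int n) (int n)}"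
  shows "\<exists>r. 0 \<le> r \<and> r < int l \<and> tiled_by x S l r"
proof -
  define A where "A = {n::nat. \<exists>r. 0 \<le> r \<and> r < int l \<and> tiled_within x S l r (- int n) (int n)}"
  define f where "f n = (SOME r. 0 \<le> r \<and> r < int l \<and> tiled_within x S l r (- int n) (int n))" for n
  have f: "0 \<le> f n \<and> f n < int l \<and> tiled_within x S l (f n) (- int n) (int n)" if "n \<in> A" for n
  proof -
    from that have "\<exists>r. 0 \<le> r \<and> r < int l \<and> tiled_within x S l r (- int n) (int n)"
      by (simp add: A_def)
    then show ?thesis unfolding f_def by (rule someI_ex)
  qed
  have "f ` A \<subseteq> {0..<int l}" using f by auto
  then have "finite (f ` A)" by (rule finite_subset) simp
  then obtain n0 where n0: "n0 \<in> A" "infinite {n \<in> A. f n = f n0}"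
    using pigeonhole_infinite windows unfolding A_def[symmetric] by blast
  have "seg x (f n0 + k * int l) l \<in> S" for k
  proof -
    obtain n where n: "n \<in> A" "f n = f n0" "nat \<bar>f n0 + k * int l\<bar> + l \<le> n"
      using n0(2) unfolding infinite_nat_iff_unbounded_le by blast
    have "- int n \<le> f n0 + k * int l" "f n0 + k * int l + int l \<le> int n" using n(3) by linarith+
    with f[OF n(1)] show ?thesis unfolding n(2) tiled_within_def by blast
  qed
  then show ?thesis using f[OF n0(1)] unfolding tiled_by_def by blast
qed

lemma marker_subshift_tiled_by:
  assumes ms: "marker_system l1 ord" and "0 < l1" and x: "x \<in> marker_subshift ord" and "1 \<le> j"
  shows "\<exists>r. 0 \<le> r \<and> r < int (lev_len l1 ord j) \<and> tiled_by x (set (ord j)) (lev_len l1 ord j) r"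
proof (rule tiled_by_if_tiled_within)
  let ?l = "lev_len l1 ord j"
  show "0 < ?l" using lev_len_pos[OF ms \<open>0 < l1\<close> \<open>1 \<le> j\<close>] .
  have "\<exists>r. 0 \<le> r \<and> r < int ?l \<and> tiled_within x (set (ord j)) ?l r (- int n) (int n)"
    if "?l < n" for n
  proof -
    obtain j' w p s where j': "1 \<le> j'" "w \<in> set (ord j')" and w: "w = p @ seg x (- int n) (2 * n) @ s"
      using x unfolding marker_subshift_def by blast
    have "j \<le> j'"
    proof (rule ccontr)
      assume "\<not> j \<le> j'"
      then have "length w \<le> ?l"
        using marker_word_length[OF ms j'] lev_len_mono[OF ms \<open>1 \<le> j'\<close>, of j] by simp
      moreover have "2 * n \<le> length w" using w by simp
      ultimately show False using that by linarith
    qed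
    then have "p @ seg x (- int n) (2 * n) @ s \<in> concat ` lists (set (ord j))"
      using marker_word_concat_lists[OF ms \<open>1 \<le> j\<close>] j'(2) w by blast
    moreover have "\<forall>v\<in>set (ord j). length v = ?l" using marker_word_length[OF ms \<open>1 \<le> j\<close>] by blast
    ultimately show ?thesis using concat_window_tiled_within[OF \<open>0 < ?l\<close>] by fastforce
  qed
  then have "{n. ?l < n} \<subseteq> {n. \<exists>r. 0 \<le> r \<and> r < int ?l \<and> tiled_within x (set (ord j)) ?l r (- int n) (int n)}"
    by blast
  moreover have "infinite {n. ?l < n}" using infinite_Ioi by (simp add: greaterThan_def)
  ultimately show "infinite {n. \<exists>r. 0 \<le> r \<and> r < int ?l \<and> tiled_within x (set (ord j)) ?l r (- int n) (int n)}"
    by (rule infinite_super)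
qed

theorem lemma4p2:
  shows "\<exists>L. \<forall>l1 ord. L \<le> l1 \<longrightarrow> marker_system l1 ord \<longrightarrow>
     (\<forall>x\<in>marker_subshift ord. \<forall>j\<ge>1.
        \<exists>!r. r < lev_len l1 ord j \<and>
             (\<forall>k::int. seg x (int r + k * int (lev_len l1 ord j)) (lev_len l1 ord j) \<in> set (ord j)))"
proof (intro exI[of _ 3] allI impI ballI)
  fix l1 ord x and j :: nat
  assume "3 \<le> l1" and ms: "marker_system l1 ord" and x: "x \<in> marker_subshift ord" and "1 \<le> j"
  let ?l = "lev_len l1 ord j"
  obtain r where r: "0 \<le> r" "r < int ?l" "tiled_by x (set (ord j)) ?l r"
    using marker_subshift_tiled_by[OF ms _ x \<open>1 \<le> j\<close>] \<open>3 \<le> l1\<close> by auto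
  show "\<exists>!r. r < ?l \<and> (\<forall>k::int. seg x (int r + k * int ?l) ?l \<in> set (ord j))"
  proof (rule ex1I[of _ "nat r"])
    show "nat r < ?l \<and> (\<forall>k::int. seg x (int (nat r) + k * int ?l) ?l \<in> set (ord j))"
      using r by (simp add: tiled_by_def)
  next
    fix r' assume r': "r' < ?l \<and> (\<forall>k::int. seg x (int r' + k * int ?l) ?l \<in> set (ord j))"
    then have "int ?l dvd int r' - r"
      using marker_system_tilings_congruent[OF ms \<open>3 \<le> l1\<close> \<open>1 \<le> j\<close> r(3)] by (simp add: tiled_by_def)
    then have "int r' mod int ?l = r mod int ?l" by (simp add: mod_eq_dvd_iff)
    then show "r' = nat r" using r r' by simp
  qed
qed

end
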